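(* Let $J\in\mathbb{R}^{n\times m}$, $h\in\mathbb{R}^n$, $g\in\mathbb{R}^m$, and $f(x)=\sum_{j=1}^m\rho(J_j\cdot x+g_j)+h^Tx$ for $x\in\{-1,1\}^n$. Let $I,S\subseteq[n]$ be disjoint, and fix $x_I\in\{-1,1\}^{|I|}$, $x_S\in\{-1,1\}^{|S|}$. Then, with $X$ uniform on $\{-1,1\}^n$, \[\mathbb{E}\big[\mathbb{1}_{X_I=x_I}e^{f(X)}\,\big|\,X_S=x_S\big]=\sum_{q\in\{-1,1\}^m}e^{g\cdot q}\prod_{i\in S}e^{x_i(J^{(i)}\cdot q+h_i)}\prod_{i\in[n]\setminus S}\cosh(J^{(i)}\cdot q+h_i)\prod_{i\in I}\sigma(2x_i(J^{(i)}\cdot q+h_i)).\]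
   Context: $J_j$ denotes the $j$-th column and $J^{(i)}$ the $i$-th row of $J$; $\rho(t)=\log(e^t+e^{-t})$; $\sigma(t)=1/(1+e^{-t})$. *)

theory Defs
  imports "HOL-Probability.Probability"
begin

definition rho :: "real \<Rightarrow> real" where
  "rho t = ln (exp t + exp (- t))"

definition sigma :: "real \<Rightarrow> real" where
  "sigma t = 1 / (1 + exp (- t))"

definition cube :: "nat \<Rightarrow> (nat \<Rightarrow> real) set" where
  "cube n = {x. (\<forall>i<n. x i \<in> {-1, 1}) \<and> (\<forall>i\<ge>n. x i = 0)}"

definition col_dot :: "nat \<Rightarrow> (nat \<Rightarrow> nat \<Rightarrow> real) \<Rightarrow> nat \<Rightarrow> (nat \<Rightarrow> real) \<Rightarrow> real" where
  "col_dot n J j x = (\<Sum>i<n. J i j * x i)"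

definition row_dot :: "nat \<Rightarrow> (nat \<Rightarrow> nat \<Rightarrow> real) \<Rightarrow> nat \<Rightarrow> (nat \<Rightarrow> real) \<Rightarrow> real" where
  "row_dot m J i q = (\<Sum>j<m. J i j * q j)"

definition rbm_f :: "nat \<Rightarrow> nat \<Rightarrow> (nat \<Rightarrow> nat \<Rightarrow> real) \<Rightarrow> (nat \<Rightarrow> real) \<Rightarrow> (nat \<Rightarrow> real)
    \<Rightarrow> (nat \<Rightarrow> real) \<Rightarrow> real" where
  "rbm_f n m J h g x = (\<Sum>j<m. rho (col_dot n J j x + g j)) + (\<Sum>i<n. h i * x i)"

end

(* Since exp (rho t) = exp t + exp (- t) is a sum over a spin s = -1, 1, exp f is a sum over hidden
   spins q in {-1,1}^m of exp (g . q) * prod_i exp (x_i * a_i), with a_i = J^(i) . q + h_i, and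
   each summand factorizes over the visible coordinates.  Conditioned on X_S = x_S, X is uniform on
   the product of the singletons {x_i} (i in S) and the sets {-1,1} (i not in S), so the expectation
   of such a product is the product of the coordinate averages: exp (x_i a_i) on S, cosh a_i off S,
   and, where the indicator pins X_i = x_i for i in I, exp (x_i a_i) / 2 = cosh a_i * sigma (2 x_i a_i). *)

theory Submission
  imports Defs "HOL-Probability.Product_PMF"
begin

lemma sum_prod_PiE_dflt:
  fixes f :: "'a \<Rightarrow> 'b \<Rightarrow> 'c :: comm_semiring_1"
  assumes "finite A" and "\<And>x. x \<in> A \<Longrightarrow> finite (B x)"
  shows "(\<Sum>y\<in>PiE_dflt A d B. \<Prod>x\<in>A. f x (y x)) = (\<Prod>x\<in>A. \<Sum>v\<in>B x. f x v)"
proof -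
  let ?ext = "\<lambda>y x. if x \<in> A then y x else d"
  have "inj_on ?ext (PiE A B)"
    by (auto simp: inj_on_def fun_eq_iff PiE_def extensional_def) metis
  then have "(\<Sum>y\<in>PiE_dflt A d B. \<Prod>x\<in>A. f x (y x)) = (\<Sum>y\<in>PiE A B. \<Prod>x\<in>A. f x (?ext y x))"
    by (simp add: sum.reindex flip: dflt_image_PiE)
  also have "\<dots> = (\<Sum>y\<in>PiE A B. \<Prod>x\<in>A. f x (y x))"
    by (intro sum.cong prod.cong) auto
  finally show ?thesis
    using assms by (simp add: prod_sum_PiE)
qed

lemma expectation_prod_pmf_of_set_PiE_dflt:
  fixes f :: "'a \<Rightarrow> 'b \<Rightarrow> real"
  assumes "finite A" and "\<And>x. x \<in> A \<Longrightarrow> finite (B x)" and "\<And>x. x \<in> A \<Longrightarrow> B x \<noteq> {}"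
  shows "measure_pmf.expectation (pmf_of_set (PiE_dflt A d B)) (\<lambda>y. \<Prod>x\<in>A. f x (y x))
       = (\<Prod>x\<in>A. (\<Sum>v\<in>B x. f x v) / card (B x))"
proof -
  have "PiE_dflt A d B \<noteq> {}" and "finite (PiE_dflt A d B)"
    using assms by auto
  then have "measure_pmf.expectation (pmf_of_set (PiE_dflt A d B)) (\<lambda>y. \<Prod>x\<in>A. f x (y x))
      = (\<Sum>y\<in>PiE_dflt A d B. \<Prod>x\<in>A. f x (y x)) / card (PiE_dflt A d B)"
    by (rule integral_pmf_of_set)
  also have "\<dots> = (\<Prod>x\<in>A. \<Sum>v\<in>B x. f x v) / (\<Prod>x\<in>A. card (B x))"
    using assms by (simp add: sum_prod_PiE_dflt card_PiE_dflt)
  finally show ?thesis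
    by (simp add: prod_dividef)
qed

lemma cond_pmf_of_set:
  assumes "finite A" and "A \<inter> B \<noteq> {}"
  shows "cond_pmf (pmf_of_set A) B = pmf_of_set (A \<inter> B)"
proof (rule pmf_eqI)
  fix x
  have "A \<noteq> {}"
    using assms(2) by auto
  then have "set_pmf (pmf_of_set A) \<inter> B \<noteq> {}"
    using assms by simp
  with \<open>A \<noteq> {}\<close> show "pmf (cond_pmf (pmf_of_set A) B) x = pmf (pmf_of_set (A \<inter> B)) x"
    using assms by (simp add: pmf_cond measure_pmf_of_set indicator_def card_gt_0_iff)
qed

lemma indicator_all_eq_prod:
  assumes "finite I"
  shows "indicator {y. \<forall>i\<in>I. y i = c i} y = (\<Prod>i\<in>I. indicator {c i} (y i) :: 'a :: comm_semiring_1)"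
  using assms by (cases "\<forall>i\<in>I. y i = c i") (auto simp: indicator_def intro!: prod_zero)

lemma prod_if_nested_subsets:
  fixes a b c :: "'a \<Rightarrow> 'b :: comm_monoid_mult"
  assumes "finite N" and "S \<subseteq> N" and "I \<subseteq> N - S"
  shows "(\<Prod>i\<in>N. if i \<in> S then a i else if i \<in> I then b i * c i else b i)
       = prod a S * prod b (N - S) * prod c I"
proof -
  let ?k = "\<lambda>i. if i \<in> S then a i else if i \<in> I then b i * c i else b i"
  have "prod ?k N = prod ?k (N - S) * prod ?k S"
    using assms by (simp add: prod.subset_diff)
  also have "prod ?k S = prod a S"
    by simp
  also have "prod ?k (N - S) = (\<Prod>i\<in>N - S. b i * (if i \<in> I then c i else 1))"
    by (intro prod.cong) auto
  also have "\<dots> = prod b (N - S) * prod c I"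
    using assms by (simp add: prod.distrib prod.If_cases Int_absorb1)
  finally show ?thesis
    by (simp add: mult_ac)
qed

lemma exp_rho: "exp (rho t) = (\<Sum>s\<in>{-1, 1}. exp (s * t))"
proof -
  have "0 < exp t + exp (- t)"
    by (intro add_pos_pos exp_gt_zero)
  then show ?thesis
    by (simp add: rho_def)
qed

lemma cosh_mult_sigma: "cosh t * sigma (2 * t) = exp t / 2"
proof -
  have "exp t * (1 + exp (- (2 * t))) = exp t + exp (- t)"
    by (simp add: distrib_left flip: exp_add)
  moreover have "1 + exp (- (2 * t)) \<noteq> 0"
    using exp_gt_zero[of "- (2 * t)"] by linarith
  ultimately show ?thesis
    by (simp add: cosh_def sigma_def field_simps)
qed

lemma exp_half_eq_cosh_mult_sigma:
  assumes "s \<in> {-1, 1}"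
  shows "exp (s * t) / 2 = cosh t * sigma (2 * s * t)"
proof -
  from assms consider "s = 1" | "s = -1"
    by blast
  then show ?thesis
  proof cases
    case 1
    then show ?thesis
      using cosh_mult_sigma[of t] by simp
  next
    case 2
    then show ?thesis
      using cosh_mult_sigma[of "- t"] by simp
  qed
qed

lemma cube_eq_PiE_dflt: "cube n = PiE_dflt {..<n} 0 (\<lambda>_. {-1, 1})"
  unfolding cube_def PiE_dflt_def lessThan_iff not_less by blast

lemma cond_pmf_cube:
  assumes "S \<subseteq> {..<n}" and "\<forall>i\<in>S. c i \<in> {-1, 1}"
  shows "cond_pmf (pmf_of_set (cube n)) {X \<in> cube n. \<forall>i\<in>S. X i = c i}
       = pmf_of_set (PiE_dflt {..<n} 0 (\<lambda>i. if i \<in> S then {c i} else {-1, 1}))"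
proof -
  have "cube n \<inter> {X \<in> cube n. \<forall>i\<in>S. X i = c i}
      = PiE_dflt {..<n} 0 (\<lambda>i. if i \<in> S then {c i} else {-1, 1})"
    unfolding cube_def PiE_dflt_def using assms
    by (intro set_eqI) (auto simp: not_less; metis)
  moreover have "finite (cube n)"
    by (auto simp: cube_eq_PiE_dflt)
  ultimately show ?thesis
    by (simp add: cond_pmf_of_set)
qed

lemma exp_rbm_f:
  "exp (rbm_f n m J h g x) = (\<Sum>q\<in>cube m. exp (\<Sum>j<m. g j * q j)
     * (\<Prod>i<n. exp (x i * (row_dot m J i q + h i))))"
proof -
  define b where "b j = col_dot n J j x + g j" for j
  have "exp (\<Sum>j<m. rho (b j)) = (\<Prod>j<m. \<Sum>s\<in>{-1, 1}. exp (s * b j))"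
    by (simp add: exp_sum exp_rho)
  also have "\<dots> = (\<Sum>q\<in>cube m. \<Prod>j<m. exp (q j * b j))"
    unfolding cube_eq_PiE_dflt by (rule sum_prod_PiE_dflt [symmetric]) auto
  finally have hidden: "exp (\<Sum>j<m. rho (b j)) = (\<Sum>q\<in>cube m. exp (\<Sum>j<m. q j * b j))"
    by (simp add: exp_sum)
  have exponent: "(\<Sum>j<m. q j * b j) + (\<Sum>i<n. h i * x i)
      = (\<Sum>j<m. g j * q j) + (\<Sum>i<n. x i * (row_dot m J i q + h i))" for q
    unfolding b_def col_dot_def row_dot_def
    by (simp add: algebra_simps sum.distrib sum_distrib_left sum_distrib_right sum.swap[of _ "{..<m}"])
  have "exp (rbm_f n m J h g x) = exp (\<Sum>j<m. rho (b j)) * exp (\<Sum>i<n. h i * x i)"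
    by (simp add: rbm_f_def b_def exp_add)
  also have "\<dots> = (\<Sum>q\<in>cube m. exp ((\<Sum>j<m. q j * b j) + (\<Sum>i<n. h i * x i)))"
    by (simp only: hidden sum_distrib_right exp_add)
  also have "\<dots> = (\<Sum>q\<in>cube m. exp ((\<Sum>j<m. g j * q j) + (\<Sum>i<n. x i * (row_dot m J i q + h i))))"
    by (simp only: exponent)
  finally show ?thesis
    by (simp add: exp_add exp_sum)
qed

lemma indicator_mult_exp_rbm_f:
  assumes "I \<subseteq> {..<n}"
  shows "indicator {X. \<forall>i\<in>I. X i = c i} x * exp (rbm_f n m J h g x)
       = (\<Sum>q\<in>cube m. exp (\<Sum>j<m. g j * q j) * (\<Prod>i<n.
           (if i \<in> I then indicator {c i} (x i) else 1) * exp (x i * (row_dot m J i q + h i))))"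
proof -
  have "(\<Prod>i<n. if i \<in> I then indicator {c i} (x i) else 1 :: real) = (\<Prod>i\<in>I. indicator {c i} (x i))"
    using assms by (simp add: Int_absorb1 flip: prod.inter_restrict)
  also have "\<dots> = indicator {X. \<forall>i\<in>I. X i = c i} x"
    using finite_subset[OF assms finite_lessThan] by (rule indicator_all_eq_prod [symmetric])
  finally show ?thesis
    by (simp add: exp_rbm_f prod.distrib sum_distrib_left mult.left_commute)
qed

lemma average_exp_pm1: "(\<Sum>s\<in>{-1, 1}. exp (s * t)) / card {-1, 1 :: real} = cosh t"
  by (simp add: cosh_def)

lemma average_indicator_exp_pm1:
  assumes "c \<in> {-1, 1}"
  shows "(\<Sum>s\<in>{-1, 1}. indicator {c} s * exp (s * t)) / card {-1, 1 :: real}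
       = cosh t * sigma (2 * c * t)"
proof -
  have "(\<Sum>s\<in>{-1, 1}. indicator {c} s * exp (s * t)) = exp (c * t)"
    using assms by (auto simp: indicator_def)
  then show ?thesis
    using exp_half_eq_cosh_mult_sigma[OF assms] by simp
qed

lemma coordinate_average:
  assumes "i \<in> S \<Longrightarrow> i \<notin> I" and "i \<in> I \<Longrightarrow> c \<in> {-1, 1}"
  shows "(\<Sum>t\<in>(if i \<in> S then {s} else {-1, 1}). (if i \<in> I then indicator {c} t else 1) * exp (t * a))
           / card (if i \<in> S then {s} else {-1, 1 :: real})
       = (if i \<in> S then exp (s * a) else if i \<in> I then cosh a * sigma (2 * c * a) else cosh a)"
proof -
  consider "i \<in> S" | "i \<notin> S" "i \<in> I" | "i \<notin> S" "i \<notin> I"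
    by blast
  then show ?thesis
  proof cases
    case 1
    then show ?thesis
      using assms(1) by simp
  next
    case 2
    then have "(\<Sum>t\<in>(if i \<in> S then {s} else {-1, 1}). (if i \<in> I then indicator {c} t else 1) * exp (t * a))
          / card (if i \<in> S then {s} else {-1, 1 :: real})
        = (\<Sum>t\<in>{-1, 1}. indicator {c} t * exp (t * a)) / card {-1, 1 :: real}"
      by simp
    also have "\<dots> = cosh a * sigma (2 * c * a)"
      using 2 assms(2) by (intro average_indicator_exp_pm1)
    finally show ?thesis
      using 2 by simp
  next
    case 3
    then show ?thesis
      using average_exp_pm1[of a] by simp
  qed
qed

lemma prod_coordinate_averages:
  fixes a c s :: "nat \<Rightarrow> real"
  assumes "I \<subseteq> {..<n}" and "S \<subseteq> {..<n}" and "I \<inter> S = {}" and "\<forall>i\<in>I. c i \<in> {-1, 1}"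
  shows "(\<Prod>i<n. (\<Sum>t\<in>(if i \<in> S then {s i} else {-1, 1}).
             (if i \<in> I then indicator {c i} t else 1) * exp (t * a i))
           / card (if i \<in> S then {s i} else {-1, 1 :: real}))
       = (\<Prod>i\<in>S. exp (s i * a i)) * (\<Prod>i\<in>{..<n} - S. cosh (a i)) * (\<Prod>i\<in>I. sigma (2 * c i * a i))"
proof -
  have "(\<Prod>i<n. (\<Sum>t\<in>(if i \<in> S then {s i} else {-1, 1}).
             (if i \<in> I then indicator {c i} t else 1) * exp (t * a i))
           / card (if i \<in> S then {s i} else {-1, 1 :: real}))
      = (\<Prod>i<n. if i \<in> S then exp (s i * a i)
           else if i \<in> I then cosh (a i) * sigma (2 * c i * a i) else cosh (a i))"
    using assms(3,4) by (intro prod.cong refl coordinate_average) auto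
  also have "\<dots> = (\<Prod>i\<in>S. exp (s i * a i)) * (\<Prod>i\<in>{..<n} - S. cosh (a i))
      * (\<Prod>i\<in>I. sigma (2 * c i * a i))"
    using assms(1-3) by (intro prod_if_nested_subsets) auto
  finally show ?thesis .
qed

theorem lemma5:
  fixes n m :: nat and J :: "nat \<Rightarrow> nat \<Rightarrow> real" and h :: "nat \<Rightarrow> real" and g :: "nat \<Rightarrow> real"
    and I S :: "nat set" and xI xS :: "nat \<Rightarrow> real"
  assumes "I \<subseteq> {..<n}" and "S \<subseteq> {..<n}" and "I \<inter> S = {}"
    and "\<forall>i\<in>I. xI i \<in> {-1, 1}" and "\<forall>i\<in>S. xS i \<in> {-1, 1}"
  shows "measure_pmf.expectation
           (cond_pmf (pmf_of_set (cube n)) {X \<in> cube n. \<forall>i\<in>S. X i = xS i})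
           (\<lambda>X. indicator {X. \<forall>i\<in>I. X i = xI i} X * exp (rbm_f n m J h g X))
       = (\<Sum>q\<in>cube m. exp (\<Sum>j<m. g j * q j)
            * (\<Prod>i\<in>S. exp (xS i * (row_dot m J i q + h i)))
            * (\<Prod>i\<in>{..<n} - S. cosh (row_dot m J i q + h i))
            * (\<Prod>i\<in>I. sigma (2 * xI i * (row_dot m J i q + h i))))"
proof -
  define a where "a q i = row_dot m J i q + h i" for q i
  define T where "T = (\<lambda>i. if i \<in> S then {xS i} else {-1, 1 :: real})"
  define F where "F q i t = (if i \<in> I then indicator {xI i} t else 1) * exp (t * a q i)" for q i t
  define e where "e q = exp (\<Sum>j<m. g j * q j)" for q :: "nat \<Rightarrow> real"
  have T: "finite (T i)" "T i \<noteq> {}" for i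
    by (simp_all add: T_def)
  have "measure_pmf.expectation (pmf_of_set (PiE_dflt {..<n} 0 T))
          (\<lambda>X. \<Sum>q\<in>cube m. e q * (\<Prod>i<n. F q i (X i)))
      = (\<Sum>q\<in>cube m. e q * measure_pmf.expectation (pmf_of_set (PiE_dflt {..<n} 0 T))
          (\<lambda>X. \<Prod>i<n. F q i (X i)))"
    using T by (simp add: integrable_measure_pmf_finite finite_PiE_dflt)
  also have "\<dots> = (\<Sum>q\<in>cube m. e q * (\<Prod>i<n. (\<Sum>t\<in>T i. F q i t) / card (T i)))"
    using T by (simp add: expectation_prod_pmf_of_set_PiE_dflt)
  also have "\<dots> = (\<Sum>q\<in>cube m. e q * (\<Prod>i\<in>S. exp (xS i * a q i))
      * (\<Prod>i\<in>{..<n} - S. cosh (a q i)) * (\<Prod>i\<in>I. sigma (2 * xI i * a q i)))"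
    unfolding T_def F_def by (simp only: prod_coordinate_averages[OF assms(1-4)] mult.assoc)
  finally show ?thesis
    using assms(1,2,5)
    by (simp add: cond_pmf_cube indicator_mult_exp_rbm_f T_def F_def a_def e_def)
qed

end
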